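(* Let $\hat S$ be a finite set of graphs with a distance $D$ (nonnegative, symmetric, satisfying the triangle inequality), and let $N\ge1$. Let the diversity $\mathrm{div}$ be one of: Average $\frac{2}{N(N-1)}\sum_{i\ne j}D(G_i,G_j)$, Bottleneck $\min_{i\neq j}D(G_i,G_j)$, or Energy with parameter $\gamma>0$, $-\frac{1}{N(N-1)}\sum_{i\ne j}D(G_i,G_j)^{-\gamma}$. Let $S$ be the set of $N$ graphs selected from $\hat S$ by the greedy algorithm, and let $\bar S$ be a maximally diverse subset of $\hat S$ with $|\bar S|=N$. Then $\mathrm{div}(S)\ge\frac12\,\mathrm{div}(\bar S)$ for Average and for Bottleneck, and $\mathrm{div}(S)\ge 2^{\gamma}\,\mathrm{div}(\bar S)$ for Energy with parameter $\gamma$.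
   Context: Greedy algorithm: start with $S=\emptyset$; at the first step add a graph of $\hat S$ chosen uniformly at random; at each subsequent step add the graph $G\in\hat S$ with the best fitness with respect to the current $S$, where the fitness is $\sum_{A\in S}D(G,A)$ (to be maximized) for Average, $\min_{A\in S}D(G,A)$ (to be maximized) for Bottleneck, and $\sum_{A\in S}D(G,A)^{-\gamma}$ (to be minimized) for Energy; stop after $N$ graphs have been selected. Note that Energy values are nonpositive, so the Energy inequality says the energy sum of $S$ is at most $2^\gamma$ times that of $\bar S$. *)

theory Defs
  imports Main Complex_Main
begin

text \<open>Graphs are modelled by an arbitrary type 'a; only the distance D on them matters.\<close>

datatype div_kind = Average | Bottleneck | Energy real

definition diversity :: "div_kind \<Rightarrow> ('a \<Rightarrow> 'a \<Rightarrow> real) \<Rightarrow> 'a set \<Rightarrow> real" where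
  "diversity k D S = (let N = real (card S); P = {(A, B). A \<in> S \<and> B \<in> S \<and> A \<noteq> B} in
     (case k of
        Average \<Rightarrow> 2 / (N * (N - 1)) * (\<Sum>(A, B)\<in>P. D A B)
      | Bottleneck \<Rightarrow> (if card S < 2 then 0 else Min ((\<lambda>(A, B). D A B) ` P))
      | Energy \<gamma> \<Rightarrow> - (1 / (N * (N - 1))) * (\<Sum>(A, B)\<in>P. D A B powr (- \<gamma>))))"

definition fitness :: "div_kind \<Rightarrow> ('a \<Rightarrow> 'a \<Rightarrow> real) \<Rightarrow> 'a set \<Rightarrow> 'a \<Rightarrow> real" where
  "fitness k D S G = (case k of
        Average \<Rightarrow> (\<Sum>A\<in>S. D G A)
      | Bottleneck \<Rightarrow> Min ((\<lambda>A. D G A) ` S)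
      | Energy \<gamma> \<Rightarrow> (\<Sum>A\<in>S. D G A powr (- \<gamma>)))"

definition at_least_as_good :: "div_kind \<Rightarrow> real \<Rightarrow> real \<Rightarrow> bool" where
  "at_least_as_good k a b = (case k of Energy _ \<Rightarrow> a \<le> b | _ \<Rightarrow> b \<le> a)"

text \<open>xs is a possible run of the greedy algorithm (arbitrary first choice, arbitrary tie-breaking).\<close>
definition greedy_run :: "div_kind \<Rightarrow> ('a \<Rightarrow> 'a \<Rightarrow> real) \<Rightarrow> 'a set \<Rightarrow> nat \<Rightarrow> 'a list \<Rightarrow> bool" where
  "greedy_run k D U N xs \<longleftrightarrow> length xs = N \<and> distinct xs \<and> set xs \<subseteq> U \<and>
     (\<forall>i. 0 < i \<and> i < N \<longrightarrow>
        (\<forall>G \<in> U - set (take i xs).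
           at_least_as_good k (fitness k D (set (take i xs)) (xs ! i))
                              (fitness k D (set (take i xs)) G)))"

definition maximally_diverse :: "div_kind \<Rightarrow> ('a \<Rightarrow> 'a \<Rightarrow> real) \<Rightarrow> 'a set \<Rightarrow> nat \<Rightarrow> 'a set \<Rightarrow> bool" where
  "maximally_diverse k D U N T \<longleftrightarrow> T \<subseteq> U \<and> card T = N \<and>
     (\<forall>T' \<subseteq> U. card T' = N \<longrightarrow> diversity k D T' \<le> diversity k D T)"

end

theory Submission
  imports Defs
begin

text \<open>
  Exchange lemma: if S has m points and T has m + 1 points, some c \<in> T - S admits a bijection
  \<sigma> from S onto T - {c} with D c (\<sigma> a) \<le> 2 * D c a; it comes from repeatedly matching the
  closest pair between S - T and T - S. Let S be the greedy prefix of length m and x the next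
  greedy point. As c was a candidate, x is at least as fit as c with respect to S, and via \<sigma>
  the fitness of c with respect to S is within the factor 2 of its fitness with respect to
  T - {c}. Induction on m along the greedy run then compares the pair sums (Average, Energy)
  or the closest pairs (Bottleneck) of the greedy set with those of any set of the same size,
  in particular of a maximally diverse one.
\<close>

lemma obtains_closest_pair:
  fixes f :: "'a \<Rightarrow> 'b \<Rightarrow> 'c::linorder"
  assumes "finite A" "finite B" "A \<noteq> {}" "B \<noteq> {}"
  obtains a b where "a \<in> A" "b \<in> B" "\<And>a' b'. a' \<in> A \<Longrightarrow> b' \<in> B \<Longrightarrow> f a b \<le> f a' b'"
proof -
  have fin: "finite (A \<times> B)" and ne: "A \<times> B \<noteq> {}" using assms by auto
  obtain a b where ab: "arg_min_on (case_prod f) (A \<times> B) = (a, b)"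
    by (cases "arg_min_on (case_prod f) (A \<times> B)")
  show ?thesis
  proof
    show "a \<in> A" "b \<in> B" using arg_min_if_finite(1)[OF fin ne, of "case_prod f"] ab by auto
    show "f a b \<le> f a' b'" if "a' \<in> A" "b' \<in> B" for a' b'
      using arg_min_least[OF fin ne, of "(a', b')" "case_prod f"] ab that by simp
  qed
qed

lemma bij_betw_fun_upd_insert:
  assumes "bij_betw \<sigma> A B" "a \<notin> A" "b \<notin> B"
  shows "bij_betw (\<sigma>(a := b)) (insert a A) (insert b B)"
proof -
  have "bij_betw (\<sigma>(a := b)) A B \<longleftrightarrow> bij_betw \<sigma> A B"
    using assms(2) by (intro bij_betw_cong) auto
  then have "bij_betw (\<sigma>(a := b)) A B" using assms(1) by simp
  then show ?thesis
    using notIn_Un_bij_betw[of a A "\<sigma>(a := b)" B] assms(2,3) by simp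
qed

lemma powr_neg_le_doubling:
  fixes s t \<gamma> :: real
  assumes "0 < s" "0 < t" "t \<le> 2 * s" "0 \<le> \<gamma>"
  shows "s powr - \<gamma> \<le> 2 powr \<gamma> * t powr - \<gamma>"
proof -
  have "s powr - \<gamma> = 2 powr \<gamma> * (2 * s) powr - \<gamma>"
    using assms by (simp add: powr_mult powr_minus field_simps)
  also have "(2 * s) powr - \<gamma> \<le> t powr - \<gamma>"
    using assms by (intro powr_mono2') auto
  finally show ?thesis by simp
qed

definition greedy_wrt :: "('a set \<Rightarrow> 'a \<Rightarrow> real) \<Rightarrow> 'a set \<Rightarrow> 'a list \<Rightarrow> bool" where
  "greedy_wrt f U xs \<longleftrightarrow> (\<forall>i < length xs. \<forall>G \<in> U - set (take i xs).
     f (set (take i xs)) G \<le> f (set (take i xs)) (xs ! i))"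

lemma greedy_wrt_snoc:
  "greedy_wrt f U (xs @ [x]) \<longleftrightarrow>
     greedy_wrt f U xs \<and> (\<forall>G \<in> U - set xs. f (set xs) G \<le> f (set xs) x)"
  by (auto simp: greedy_wrt_def nth_append less_Suc_eq)

definition pair_sum :: "(real \<Rightarrow> real) \<Rightarrow> ('a \<Rightarrow> 'a \<Rightarrow> real) \<Rightarrow> 'a set \<Rightarrow> real" where
  "pair_sum w D S = (\<Sum>(A, B) \<in> S \<times> S - Id. w (D A B))"

lemma pair_sum_eq_double_sum:
  assumes "finite S"
  shows "pair_sum w D S = (\<Sum>A\<in>S. \<Sum>B\<in>S - {A}. w (D A B))"
proof -
  have "S \<times> S - Id = Sigma S (\<lambda>A. S - {A})" by auto
  then show ?thesis using assms by (simp add: pair_sum_def sum.Sigma)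
qed

locale pseudometric_on =
  fixes U :: "'a set" and D :: "'a \<Rightarrow> 'a \<Rightarrow> real"
  assumes nonneg: "x \<in> U \<Longrightarrow> y \<in> U \<Longrightarrow> 0 \<le> D x y"
    and commute: "x \<in> U \<Longrightarrow> y \<in> U \<Longrightarrow> D x y = D y x"
    and triangle: "x \<in> U \<Longrightarrow> y \<in> U \<Longrightarrow> z \<in> U \<Longrightarrow> D x z \<le> D x y + D y z"
begin

lemma exchange_bijection:
  assumes "finite S" "S \<subseteq> U" "T \<subseteq> U" "card T = Suc (card S)"
  obtains c \<sigma> where "c \<in> T - S" "bij_betw \<sigma> S (T - {c})" "\<forall>a\<in>S. D c (\<sigma> a) \<le> 2 * D c a"
  using assms
proof (induction "card S" arbitrary: S T thesis)
  case 0
  then obtain c where "T = {c}" "S = {}"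
    by (auto simp: card_Suc_eq)
  with 0 show ?case by auto
next
  case (Suc n)
  have "finite T" using Suc.prems(5) card.infinite by fastforce
  show ?case
  proof (cases "S \<subseteq> T")
    case True
    then have "card (T - S) = 1" using Suc.prems by (simp add: card_Diff_subset)
    then obtain c where c: "T - S = {c}" by (auto simp: card_Suc_eq)
    with True have "T - {c} = S" by auto
    moreover have "c \<in> U" using c Suc.prems(4) by blast
    then have "D c a \<le> 2 * D c a" if "a \<in> S" for a
      using nonneg[of c a] that Suc.prems(3) by auto
    ultimately show ?thesis using Suc.prems(1)[of c id] c by auto
  next
    case False
    have "\<not> T \<subseteq> S" using Suc.prems card_mono[of S T] by auto
    with False obtain a b where ab: "a \<in> S - T" "b \<in> T - S"
      and closest: "\<And>a' b'. a' \<in> S - T \<Longrightarrow> b' \<in> T - S \<Longrightarrow> D a b \<le> D a' b'"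
      using obtains_closest_pair[of "S - T" "T - S" D] \<open>finite T\<close> Suc.prems(2) by blast
    have "n = card (S - {a})" "card (T - {b}) = Suc (card (S - {a}))"
      using Suc.hyps(2) Suc.prems(5) ab \<open>finite T\<close> by auto
    then obtain c \<sigma> where c: "c \<in> (T - {b}) - (S - {a})"
      and \<sigma>: "bij_betw \<sigma> (S - {a}) (T - {b} - {c})"
      and le: "\<forall>a'\<in>S - {a}. D c (\<sigma> a') \<le> 2 * D c a'"
      using Suc.hyps(1)[of "S - {a}" "T - {b}"] Suc.prems(2-4) by blast
    have "bij_betw (\<sigma>(a := b)) (insert a (S - {a})) (insert b (T - {b} - {c}))"
      using \<sigma> by (rule bij_betw_fun_upd_insert) auto
    moreover have "insert a (S - {a}) = S" "insert b (T - {b} - {c}) = T - {c}"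
      using ab c by auto
    moreover have "D c b \<le> 2 * D c a"
    proof -
      have U: "a \<in> U" "b \<in> U" "c \<in> U" using ab c Suc.prems by auto
      have "D c b \<le> D c a + D a b" using triangle U by blast
      also have "D a b \<le> D a c" using closest[of a c] ab c by auto
      finally show ?thesis using commute U by simp
    qed
    moreover have "c \<in> T - S" using ab c by auto
    ultimately show ?thesis
      using Suc.prems(1)[of c "\<sigma>(a := b)"] le by auto
  qed
qed

lemma pair_sum_insert:
  assumes "finite S" "x \<notin> S" "insert x S \<subseteq> U"
  shows "pair_sum w D (insert x S) = pair_sum w D S + 2 * (\<Sum>a\<in>S. w (D x a))"
proof -
  have "(\<Sum>B\<in>insert x S - {A}. w (D A B)) = w (D x A) + (\<Sum>B\<in>S - {A}. w (D A B))"
    if "A \<in> S" for A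
    using assms that by (auto simp: insert_Diff_if commute subset_iff)
  then show ?thesis
    using assms(1,2) by (simp add: pair_sum_eq_double_sum sum.distrib)
qed

lemma greedy_pair_sum_bound:
  assumes doubling: "\<And>u a b. u \<in> U \<Longrightarrow> a \<in> U \<Longrightarrow> b \<in> U \<Longrightarrow> u \<noteq> a \<Longrightarrow> u \<noteq> b \<Longrightarrow>
      D u b \<le> 2 * D u a \<Longrightarrow> c * w (D u b) \<le> w (D u a)"
    and "greedy_wrt (\<lambda>S G. \<Sum>a\<in>S. w (D G a)) U xs" "distinct xs" "set xs \<subseteq> U"
    and "finite T" "T \<subseteq> U" "card T = length xs"
  shows "c * pair_sum w D T \<le> pair_sum w D (set xs)"
  using assms(2-)
proof (induction xs arbitrary: T rule: rev_induct)
  case Nil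
  then show ?case by (simp add: pair_sum_def)
next
  case (snoc x xs)
  have greedy: "greedy_wrt (\<lambda>S G. \<Sum>a\<in>S. w (D G a)) U xs"
    and best: "\<And>G. G \<in> U - set xs \<Longrightarrow>
      (\<Sum>a\<in>set xs. w (D G a)) \<le> (\<Sum>a\<in>set xs. w (D x a))"
    using snoc.prems(1) by (simp_all add: greedy_wrt_snoc)
  have "card T = Suc (card (set xs))" using snoc.prems by (simp add: distinct_card)
  then obtain z \<sigma> where z: "z \<in> T - set xs" and \<sigma>: "bij_betw \<sigma> (set xs) (T - {z})"
    and close: "\<forall>a\<in>set xs. D z (\<sigma> a) \<le> 2 * D z a"
    using exchange_bijection[of "set xs" T] snoc.prems by auto
  have "c * pair_sum w D (T - {z}) \<le> pair_sum w D (set xs)"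
    using snoc.IH[OF greedy, of "T - {z}"] snoc.prems z by auto
  moreover have "c * (\<Sum>b\<in>T - {z}. w (D z b)) \<le> (\<Sum>a\<in>set xs. w (D x a))"
  proof -
    have "c * (\<Sum>b\<in>T - {z}. w (D z b)) = (\<Sum>a\<in>set xs. c * w (D z (\<sigma> a)))"
      by (simp add: sum.reindex_bij_betw[OF \<sigma>, of "\<lambda>b. c * w (D z b)"] sum_distrib_left)
    also have "\<dots> \<le> (\<Sum>a\<in>set xs. w (D z a))"
    proof (rule sum_mono)
      fix a assume a: "a \<in> set xs"
      have "\<sigma> a \<in> T - {z}" using bij_betw_apply[OF \<sigma> a] .
      moreover have "a \<in> U" "z \<in> U" "z \<noteq> a" using a z snoc.prems(3,5) by auto
      ultimately show "c * w (D z (\<sigma> a)) \<le> w (D z a)"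
        using doubling[of z a "\<sigma> a"] close a snoc.prems(5) by blast
    qed
    also have "\<dots> \<le> (\<Sum>a\<in>set xs. w (D x a))"
      using best z snoc.prems by auto
    finally show ?thesis .
  qed
  moreover have "pair_sum w D T = pair_sum w D (T - {z}) + 2 * (\<Sum>b\<in>T - {z}. w (D z b))"
    using pair_sum_insert[of "T - {z}" z w] z snoc.prems(4,5) by (auto simp: insert_absorb)
  moreover have
    "pair_sum w D (set (xs @ [x])) = pair_sum w D (set xs) + 2 * (\<Sum>a\<in>set xs. w (D x a))"
    using pair_sum_insert[of "set xs" x w] snoc.prems by simp
  ultimately show ?case by (simp add: algebra_simps)
qed

lemma greedy_close_pair:
  assumes "greedy_wrt (\<lambda>S G. Min ((\<lambda>a. D G a) ` S)) U xs" "distinct xs" "set xs \<subseteq> U"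
    and "finite T" "T \<subseteq> U" "card T = length xs"
    and "A \<in> set xs" "B \<in> set xs" "A \<noteq> B"
  shows "\<exists>u\<in>T. \<exists>v\<in>T. u \<noteq> v \<and> D u v \<le> 2 * D A B"
  using assms
proof (induction xs arbitrary: T A B rule: rev_induct)
  case Nil
  then show ?case by simp
next
  case (snoc x xs)
  have greedy: "greedy_wrt (\<lambda>S G. Min ((\<lambda>a. D G a) ` S)) U xs"
    and best: "\<And>G. G \<in> U - set xs \<Longrightarrow>
      Min ((\<lambda>a. D G a) ` set xs) \<le> Min ((\<lambda>a. D x a) ` set xs)"
    using snoc.prems(1) by (simp_all add: greedy_wrt_snoc)
  have "card T = Suc (card (set xs))" using snoc.prems by (simp add: distinct_card)
  then obtain z \<sigma> where z: "z \<in> T - set xs" and \<sigma>: "bij_betw \<sigma> (set xs) (T - {z})"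
    and close: "\<forall>a\<in>set xs. D z (\<sigma> a) \<le> 2 * D z a"
    using exchange_bijection[of "set xs" T] snoc.prems by auto
  have new_pair: "\<exists>u\<in>T. \<exists>v\<in>T. u \<noteq> v \<and> D u v \<le> 2 * D x b" if b: "b \<in> set xs" for b
  proof -
    have "finite (set xs)" "set xs \<noteq> {}" using b by auto
    then obtain a where a: "a \<in> set xs" "Min ((\<lambda>a. D z a) ` set xs) = D z a"
      by (rule obtains_MIN)
    have "z \<in> U" using z snoc.prems(5) by blast
    then have "D z a \<le> Min ((\<lambda>a. D x a) ` set xs)" using best[of z] a(2) z by simp
    also have "\<dots> \<le> D x b" using b by (intro Min_le) auto
    finally have "D z (\<sigma> a) \<le> 2 * D x b" using close a by fastforce
    moreover have "\<sigma> a \<in> T - {z}" using bij_betw_apply[OF \<sigma> a(1)] .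
    ultimately show ?thesis
      using z by (intro bexI[of _ z] bexI[of _ "\<sigma> a"]) auto
  qed
  consider "A \<in> set xs" "B \<in> set xs" | "A = x" "B \<in> set xs" | "B = x" "A \<in> set xs"
    using snoc.prems(7-9) by auto
  then show ?case
  proof cases
    case 1
    have "card (T - {z}) = length xs" using snoc.prems(4,6) z by simp
    then have "\<exists>u\<in>T - {z}. \<exists>v\<in>T - {z}. u \<noteq> v \<and> D u v \<le> 2 * D A B"
      using snoc.IH[OF greedy _ _ _ _ _ 1 snoc.prems(9), of "T - {z}"] snoc.prems(2-5) by auto
    then show ?thesis by blast
  next
    case 2
    then show ?thesis using new_pair by simp
  next
    case 3
    then have "D A B = D x A" using commute snoc.prems(3) by auto
    then show ?thesis using new_pair[OF 3(2)] by simp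
  qed
qed

end

lemma distinct_pairs_eq_Times_minus_Id: "{(A, B). A \<in> S \<and> B \<in> S \<and> A \<noteq> B} = S \<times> S - Id"
  by auto

lemma diversity_Average:
  "diversity Average D S = 2 / (real (card S) * (real (card S) - 1)) * pair_sum (\<lambda>t. t) D S"
  by (simp add: diversity_def pair_sum_def distinct_pairs_eq_Times_minus_Id Let_def)

lemma diversity_Energy:
  "diversity (Energy \<gamma>) D S =
     1 / (real (card S) * (real (card S) - 1)) * pair_sum (\<lambda>t. - (t powr - \<gamma>)) D S"
  unfolding diversity_def pair_sum_def distinct_pairs_eq_Times_minus_Id Let_def
  by (simp add: case_prod_unfold sum_negf)

lemma diversity_Bottleneck_le:
  assumes "finite S" "A \<in> S" "B \<in> S" "A \<noteq> B"
  shows "diversity Bottleneck D S \<le> D A B"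
proof -
  have "\<not> card S < 2" using assms card_le_Suc0_iff_eq[of S] by auto
  then show ?thesis
    using assms by (auto simp: diversity_def distinct_pairs_eq_Times_minus_Id intro!: Min_le)
qed

lemma diversity_Bottleneck_attained:
  assumes "finite S" "2 \<le> card S"
  obtains A B where "A \<in> S" "B \<in> S" "A \<noteq> B" "diversity Bottleneck D S = D A B"
proof -
  have "S \<times> S - Id \<noteq> {}" using assms card_le_Suc0_iff_eq[of S] by auto
  then have "Min ((\<lambda>(A, B). D A B) ` (S \<times> S - Id)) \<in> (\<lambda>(A, B). D A B) ` (S \<times> S - Id)"
    using assms(1) by (intro Min_in) auto
  then show ?thesis
    using that assms(2) by (auto simp: diversity_def distinct_pairs_eq_Times_minus_Id)
qed

lemma fitness_empty: "fitness k D {} G = fitness k D {} G'"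
  by (cases k) (simp_all add: fitness_def)

lemma greedy_run_imp_greedy_wrt:
  assumes "greedy_run k D U N xs" "\<And>a b. at_least_as_good k a b \<Longrightarrow> g b \<le> g a"
  shows "greedy_wrt (\<lambda>S G. g (fitness k D S G)) U xs"
  unfolding greedy_wrt_def
proof (intro allI impI ballI)
  fix i G assume i: "i < length xs" and G: "G \<in> U - set (take i xs)"
  show "g (fitness k D (set (take i xs)) G) \<le> g (fitness k D (set (take i xs)) (xs ! i))"
  proof (cases "i = 0")
    case True
    \<comment> \<open>The first choice of a greedy run is free, but all candidates are equally fit there.\<close>
    then show ?thesis using fitness_empty[of k D G "xs ! i"] by simp
  next
    case False
    then show ?thesis using assms i G unfolding greedy_run_def by auto
  qed
qed

context pseudometric_on
begin

lemma greedy_run_Average_approx: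
  assumes "greedy_run Average D U N xs" "finite T" "T \<subseteq> U" "card T = N"
  shows "1 / 2 * diversity Average D T \<le> diversity Average D (set xs)"
proof -
  have xs: "distinct xs" "set xs \<subseteq> U" "length xs = N"
    using assms(1) by (simp_all add: greedy_run_def)
  have "greedy_wrt (\<lambda>S G. \<Sum>a\<in>S. D G a) U xs"
    using greedy_run_imp_greedy_wrt[OF assms(1), of "\<lambda>t. t"]
    by (simp add: at_least_as_good_def fitness_def)
  then have sums: "1 / 2 * pair_sum (\<lambda>t. t) D T \<le> pair_sum (\<lambda>t. t) D (set xs)"
    using xs assms(2-4) by (intro greedy_pair_sum_bound) auto
  define q where "q = 2 / (real N * (real N - 1))"
  have "0 \<le> q" unfolding q_def by (cases N) auto
  have "1 / 2 * diversity Average D T = q * (1 / 2 * pair_sum (\<lambda>t. t) D T)"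
    by (simp add: diversity_Average q_def assms(4))
  also have "\<dots> \<le> q * pair_sum (\<lambda>t. t) D (set xs)"
    using sums \<open>0 \<le> q\<close> by (rule mult_left_mono)
  also have "\<dots> = diversity Average D (set xs)"
    using xs by (simp add: diversity_Average q_def distinct_card)
  finally show ?thesis .
qed

lemma greedy_run_Energy_approx:
  assumes "greedy_run (Energy \<gamma>) D U N xs" "finite T" "T \<subseteq> U" "card T = N"
    and "0 < \<gamma>" "\<And>x y. x \<in> U \<Longrightarrow> y \<in> U \<Longrightarrow> x \<noteq> y \<Longrightarrow> 0 < D x y"
  shows "2 powr \<gamma> * diversity (Energy \<gamma>) D T \<le> diversity (Energy \<gamma>) D (set xs)"
proof -
  \<comment> \<open>Energy is minimised, so the greedy run maximises the negated weight.\<close>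
  define w where "w = (\<lambda>t::real. - (t powr - \<gamma>))"
  have xs: "distinct xs" "set xs \<subseteq> U" "length xs = N"
    using assms(1) by (simp_all add: greedy_run_def)
  have "greedy_wrt (\<lambda>S G. \<Sum>a\<in>S. w (D G a)) U xs"
    using greedy_run_imp_greedy_wrt[OF assms(1), of uminus]
    by (simp add: at_least_as_good_def fitness_def sum_negf w_def)
  moreover have "2 powr \<gamma> * w (D u b) \<le> w (D u a)"
    if "u \<in> U" "a \<in> U" "b \<in> U" "u \<noteq> a" "u \<noteq> b" "D u b \<le> 2 * D u a" for u a b
    using powr_neg_le_doubling[of "D u a" "D u b" \<gamma>] assms(5,6) that by (simp add: w_def)
  ultimately have sums: "2 powr \<gamma> * pair_sum w D T \<le> pair_sum w D (set xs)"
    using xs assms(2-4) by (intro greedy_pair_sum_bound) auto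
  define q where "q = 1 / (real N * (real N - 1))"
  have "0 \<le> q" unfolding q_def by (cases N) auto
  have "2 powr \<gamma> * diversity (Energy \<gamma>) D T = q * (2 powr \<gamma> * pair_sum w D T)"
    by (simp add: diversity_Energy q_def assms(4) w_def)
  also have "\<dots> \<le> q * pair_sum w D (set xs)"
    using sums \<open>0 \<le> q\<close> by (rule mult_left_mono)
  also have "\<dots> = diversity (Energy \<gamma>) D (set xs)"
    using xs by (simp add: diversity_Energy q_def distinct_card w_def)
  finally show ?thesis .
qed

lemma greedy_run_Bottleneck_approx:
  assumes "greedy_run Bottleneck D U N xs" "finite T" "T \<subseteq> U" "card T = N"
  shows "1 / 2 * diversity Bottleneck D T \<le> diversity Bottleneck D (set xs)"
proof (cases "N < 2")
  case True
  have "card (set xs) = N"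
    using assms(1) by (simp add: greedy_run_def distinct_card)
  with True assms(4) show ?thesis by (simp add: diversity_def)
next
  case False
  have xs: "distinct xs" "set xs \<subseteq> U" "length xs = N"
    using assms(1) by (simp_all add: greedy_run_def)
  then have "2 \<le> card (set xs)" using False by (simp add: distinct_card)
  then obtain A B where AB: "A \<in> set xs" "B \<in> set xs" "A \<noteq> B"
    and div: "diversity Bottleneck D (set xs) = D A B"
    by (rule diversity_Bottleneck_attained[OF finite_set])
  have "greedy_wrt (\<lambda>S G. Min ((\<lambda>a. D G a) ` S)) U xs"
    using greedy_run_imp_greedy_wrt[OF assms(1), of "\<lambda>t. t"]
    by (simp add: at_least_as_good_def fitness_def)
  then have "\<exists>u\<in>T. \<exists>v\<in>T. u \<noteq> v \<and> D u v \<le> 2 * D A B"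
    using xs AB assms(2-4) by (intro greedy_close_pair) auto
  then obtain u v where "u \<in> T" "v \<in> T" "u \<noteq> v" "D u v \<le> 2 * D A B"
    by blast
  then show ?thesis
    using diversity_Bottleneck_le[OF assms(2), of u v D] div by simp
qed

end

theorem theorem2:
  fixes D :: "'a \<Rightarrow> 'a \<Rightarrow> real" and U :: "'a set" and N :: nat and k :: div_kind
    and xs :: "'a list" and Sbar :: "'a set"
  assumes "finite U"
    and "\<And>x y. x \<in> U \<Longrightarrow> y \<in> U \<Longrightarrow> D x y \<ge> 0"
    and "\<And>x. x \<in> U \<Longrightarrow> D x x = 0"
    and "\<And>x y. x \<in> U \<Longrightarrow> y \<in> U \<Longrightarrow> D x y = D y x"
    and "\<And>x y z. x \<in> U \<Longrightarrow> y \<in> U \<Longrightarrow> z \<in> U \<Longrightarrow> D x z \<le> D x y + D y z"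
    and "N \<ge> 1"
    and "\<And>\<gamma>. k = Energy \<gamma> \<Longrightarrow> \<gamma> > 0 \<and> (\<forall>x\<in>U. \<forall>y\<in>U. x \<noteq> y \<longrightarrow> D x y > 0)"
    and "greedy_run k D U N xs"
    and "maximally_diverse k D U N Sbar"
  shows "(case k of
            Energy \<gamma> \<Rightarrow> diversity k D (set xs) \<ge> 2 powr \<gamma> * diversity k D Sbar
          | _ \<Rightarrow> diversity k D (set xs) \<ge> 1 / 2 * diversity k D Sbar)"
proof -
  interpret pseudometric_on U D
    using assms(2,4,5) by unfold_locales
  have Sbar: "finite Sbar" "Sbar \<subseteq> U" "card Sbar = N"
    using assms(1,9) finite_subset by (auto simp: maximally_diverse_def)
  show ?thesis
  proof (cases k)
    case Average
    then show ?thesis using greedy_run_Average_approx[OF _ Sbar] assms(8) by simp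
  next
    case Bottleneck
    then show ?thesis using greedy_run_Bottleneck_approx[OF _ Sbar] assms(8) by simp
  next
    case (Energy \<gamma>)
    then show ?thesis using greedy_run_Energy_approx[OF _ Sbar] assms(7,8) by simp
  qed
qed

end
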